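(* Let $P(s)=s^\alpha$ with $\alpha>1$. Consider the class of non-migratory SRPT-based online policies on $m$ servers defined as follows. For a server $j$ and time $t$, let $y_j(t)$ be the least remaining processing time among the jobs queued at server $j$, with $y_j(t)=0$ if server $j$ is idle. When a job of size $x$ arrives at time $t$: if the set $\{j : y_j(t)>x\}$ is nonempty, the job is assigned to some server in this set; otherwise it is assigned to any server or held in a central queue. Each server may preempt among the jobs queued at it, but a job once assigned to a server must complete service at that server (no migration); speeds are chosen arbitrarily. Then there is a constant $\kappa>0$ depending only on $\alpha$ such that every policy in this class has competitive ratio at least $\kappa\, m^{1-1/\alpha}$; i.e., the competitive ratio is $\Omega(m^{1-1/\alpha})$.
   Context: There are $m$ identical servers, each of which can run at any speed $s\ge 0$ at power $P(s)$; work is processed at rate $s$. An input instance $\sigma$ is a finite set of jobs with release times and sizes. The cost of a schedule is $C=\int n(t)\,dt+\int\sum_{k=1}^m P(s_k(t))\,dt$, where $n(t)$ is the number of released, unfinished jobs at time $t$ and $s_k(t)$ the speed of server $k$. $\mathsf{OPT}$ is the offline optimal schedule (knowing $\sigma$ in advance, preemption and migration allowed, no job processed on two servers simultaneously). The competitive ratio of an online policy $A$ is $\sup_\sigma C_A(\sigma)/C_{\mathsf{OPT}}(\sigma)$. *)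

theory Defs
  imports "HOL-Analysis.Analysis"
begin

text \<open>
  Instances: n jobs indexed 0..<n, release times r i >= 0, sizes x i > 0.
  Schedules: w k i t = speed that server k (k < m) devotes to job i at time t.
\<close>

definition valid_instance :: "nat \<Rightarrow> (nat \<Rightarrow> real) \<Rightarrow> (nat \<Rightarrow> real) \<Rightarrow> bool" where
  "valid_instance n r x \<longleftrightarrow> (\<forall>i<n. 0 \<le> r i \<and> 0 < x i)"

definition feasible_schedule ::
  "nat \<Rightarrow> nat \<Rightarrow> (nat \<Rightarrow> real) \<Rightarrow> (nat \<Rightarrow> nat \<Rightarrow> real \<Rightarrow> real) \<Rightarrow> bool" where
  "feasible_schedule m n r w \<longleftrightarrow>
     (\<forall>k<m. \<forall>i<n. w k i \<in> borel_measurable borel \<and> (\<forall>t. 0 \<le> w k i t) \<and> (\<forall>t. t < r i \<longrightarrow> w k i t = 0)) \<and>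
     (\<forall>k<m. \<forall>t. \<forall>i<n. \<forall>i'<n. 0 < w k i t \<and> 0 < w k i' t \<longrightarrow> i = i') \<and>
     (\<forall>i<n. \<forall>t. \<forall>k<m. \<forall>k'<m. 0 < w k i t \<and> 0 < w k' i t \<longrightarrow> k = k')"

definition work :: "nat \<Rightarrow> (nat \<Rightarrow> nat \<Rightarrow> real \<Rightarrow> real) \<Rightarrow> nat \<Rightarrow> real \<Rightarrow> ennreal" where
  "work m w i t = (\<integral>\<^sup>+ \<tau>. ennreal (\<Sum>k<m. w k i \<tau>) * indicator {..t} \<tau> \<partial>lborel)"

definition nalive ::
  "nat \<Rightarrow> nat \<Rightarrow> (nat \<Rightarrow> real) \<Rightarrow> (nat \<Rightarrow> real) \<Rightarrow> (nat \<Rightarrow> nat \<Rightarrow> real \<Rightarrow> real) \<Rightarrow> real \<Rightarrow> nat" where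
  "nalive m n r x w t = card {i. i < n \<and> r i \<le> t \<and> work m w i t < ennreal (x i)}"

definition cost ::
  "nat \<Rightarrow> real \<Rightarrow> nat \<Rightarrow> (nat \<Rightarrow> real) \<Rightarrow> (nat \<Rightarrow> real) \<Rightarrow> (nat \<Rightarrow> nat \<Rightarrow> real \<Rightarrow> real) \<Rightarrow> ennreal" where
  "cost m \<alpha> n r x w =
     (\<integral>\<^sup>+ t. ennreal (real (nalive m n r x w t)) \<partial>lborel) +
     (\<integral>\<^sup>+ t. (\<Sum>k<m. ennreal ((\<Sum>i<n. w k i t) powr \<alpha>)) \<partial>lborel)"

definition opt :: "nat \<Rightarrow> real \<Rightarrow> nat \<Rightarrow> (nat \<Rightarrow> real) \<Rightarrow> (nat \<Rightarrow> real) \<Rightarrow> ennreal" where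
  "opt m \<alpha> n r x = (INF w \<in> {w. feasible_schedule m n r w}. cost m \<alpha> n r x w)"

text \<open>A policy maps an instance (n, r, x) to (w, a, d): schedule w, server assignment a,
  dispatch time d (d i = infinity: never dispatched; d i > r i: held in the central queue).\<close>
type_synonym policy =
  "nat \<Rightarrow> (nat \<Rightarrow> real) \<Rightarrow> (nat \<Rightarrow> real) \<Rightarrow> (nat \<Rightarrow> nat \<Rightarrow> real \<Rightarrow> real) \<times> (nat \<Rightarrow> nat) \<times> (nat \<Rightarrow> ereal)"

text \<open>Jobs queued at server j at the arrival of job i (jobs arriving at the same instant
  are considered in index order).\<close>
definition queued ::
  "nat \<Rightarrow> nat \<Rightarrow> (nat \<Rightarrow> real) \<Rightarrow> (nat \<Rightarrow> real) \<Rightarrow> (nat \<Rightarrow> nat \<Rightarrow> real \<Rightarrow> real) \<Rightarrow> (nat \<Rightarrow> nat) \<Rightarrow> (nat \<Rightarrow> ereal)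
     \<Rightarrow> nat \<Rightarrow> nat \<Rightarrow> nat set" where
  "queued m n r x w a d i j =
     {l. l < n \<and> l \<noteq> i \<and> a l = j \<and> d l \<le> ereal (r i) \<and> (r l < r i \<or> (r l = r i \<and> l < i)) \<and>
         work m w l (r i) < ennreal (x l)}"

definition yval ::
  "nat \<Rightarrow> nat \<Rightarrow> (nat \<Rightarrow> real) \<Rightarrow> (nat \<Rightarrow> real) \<Rightarrow> (nat \<Rightarrow> nat \<Rightarrow> real \<Rightarrow> real) \<Rightarrow> (nat \<Rightarrow> nat) \<Rightarrow> (nat \<Rightarrow> ereal)
     \<Rightarrow> nat \<Rightarrow> nat \<Rightarrow> real" where
  "yval m n r x w a d i j =
     (let Q = queued m n r x w a d i j in
      if Q = {} then 0 else Min ((\<lambda>l. x l - enn2real (work m w l (r i))) ` Q))"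

definition srpt_nonmig_rules :: "nat \<Rightarrow> policy \<Rightarrow> bool" where
  "srpt_nonmig_rules m A \<longleftrightarrow>
     (\<forall>n r x. valid_instance n r x \<longrightarrow>
        (case A n r x of (w, a, d) \<Rightarrow>
           feasible_schedule m n r w \<and>
           (\<forall>i<n. a i < m \<and> ereal (r i) \<le> d i) \<and>
           (\<forall>k<m. \<forall>i<n. \<forall>t. 0 < w k i t \<longrightarrow> k = a i \<and> d i \<le> ereal t) \<and>
           (\<forall>i<n. {j. j < m \<and> yval m n r x w a d i j > x i} \<noteq> {} \<longrightarrow>
                 d i = ereal (r i) \<and> a i \<in> {j. j < m \<and> yval m n r x w a d i j > x i})))"

definition online_policy :: "nat \<Rightarrow> policy \<Rightarrow> bool" where
  "online_policy m A \<longleftrightarrow>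
     (\<forall>n r x n' r' x' t. valid_instance n r x \<and> valid_instance n' r' x' \<and>
        (\<forall>i. (i < n \<and> r i \<le> t) \<longleftrightarrow> (i < n' \<and> r' i \<le> t)) \<and>
        (\<forall>i<n. r i \<le> t \<longrightarrow> r' i = r i \<and> x' i = x i) \<longrightarrow>
        (case A n r x of (w, a, d) \<Rightarrow> case A n' r' x' of (w', a', d') \<Rightarrow>
           (\<forall>i<n. r i \<le> t \<longrightarrow>
              (\<forall>k<m. \<forall>\<tau>\<le>t. w k i \<tau> = w' k i \<tau>) \<and>
              ((d i \<le> ereal t \<or> d' i \<le> ereal t) \<longrightarrow> d i = d' i \<and> a i = a' i))))"

definition srpt_nonmig_policy :: "nat \<Rightarrow> policy \<Rightarrow> bool" where
  "srpt_nonmig_policy m A \<longleftrightarrow> online_policy m A \<and> srpt_nonmig_rules m A"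

definition comp_ratio :: "nat \<Rightarrow> real \<Rightarrow> policy \<Rightarrow> ennreal" where
  "comp_ratio m \<alpha> A =
     (SUP (n, r, x) \<in> {(n, r, x). valid_instance n r x}.
        cost m \<alpha> n r x (fst (A n r x)) / opt m \<alpha> n r x)"

end

theory Submission
  imports Defs
begin

(* The adversary first releases one unit job at time 0. If the policy's cost on it is finite,
   the job is dispatched at some time D to some server j, and by the bounded energy it has received
   at most half a unit of work by a time t slightly after D. The adversary then releases m jobs at
   time t with decreasing sizes in [1/8, 1/4]. Until t the policy cannot tell the two instances
   apart, so each new job finds server j holding jobs with more remaining work than its own size and
   every other server idle; the SRPT rule therefore sends all m jobs to server j. A single server
   facing m jobs of size at least 1/8 pays m^(2-1/alpha) up to a constant factor: either it finishes
   half of them within time m^(1-1/alpha), which by Young's inequality costs that much energy, or half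
   of them stay alive that long. Serving them on separate servers at unit speed costs O(m). *)

lemma sum_eq_single_nonneg:
  fixes f :: "nat \<Rightarrow> real"
  assumes "j < m" "\<And>k. k < m \<Longrightarrow> 0 \<le> f k" "\<And>k. k < m \<Longrightarrow> 0 < f k \<Longrightarrow> k = j"
  shows "(\<Sum>k<m. f k) = f j"
proof -
  have "(\<Sum>k<m. f k) = f j + (\<Sum>k\<in>{..<m} - {j}. f k)"
    using assms(1) by (simp add: sum.remove)
  also have "(\<Sum>k\<in>{..<m} - {j}. f k) = 0"
    using assms(2,3) by (intro sum.neutral) (force simp: order.order_iff_strict)
  finally show ?thesis by simp
qed

lemma le_add_powr_div_powr:
  fixes s c \<alpha> :: real
  assumes "0 \<le> s" "0 < c" "1 < \<alpha>"
  shows "s \<le> c + s powr \<alpha> / c powr (\<alpha> - 1)"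
proof (cases "s \<le> c")
  case True
  then show ?thesis by (simp add: add_increasing2)
next
  case False
  then have "1 \<le> (s / c) powr (\<alpha> - 1)"
    using assms by (intro ge_one_powr_ge_zero) auto
  then have "s \<le> s * (s / c) powr (\<alpha> - 1)"
    using assms by (simp add: mult_le_cancel_left1)
  also have "\<dots> = s powr \<alpha> / c powr (\<alpha> - 1)"
    using assms False by (simp add: powr_divide powr_diff)
  finally show ?thesis using assms(2) by linarith
qed

lemma nn_integral_le_linear_plus_powr:
  fixes f :: "real \<Rightarrow> real"
  assumes f: "f \<in> borel_measurable borel" "\<And>t. 0 \<le> f t" and "a \<le> b" "0 < c" "1 < \<alpha>"
  shows "(\<integral>\<^sup>+ t. ennreal (f t) * indicator {a..b} t \<partial>lborel) \<le>
    ennreal (c * (b - a)) + ennreal (1 / c powr (\<alpha> - 1)) *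
      (\<integral>\<^sup>+ t. ennreal (f t powr \<alpha>) * indicator {a..b} t \<partial>lborel)"
proof -
  define K where "K = 1 / c powr (\<alpha> - 1)"
  have "ennreal (f t) \<le> ennreal c + ennreal K * ennreal (f t powr \<alpha>)" for t
  proof -
    have "f t \<le> c + K * f t powr \<alpha>"
      using le_add_powr_div_powr[OF f(2) assms(4,5)] by (simp add: K_def)
    then show ?thesis
      using assms(4) by (simp add: K_def ennreal_leI flip: ennreal_mult ennreal_plus)
  qed
  then have "(\<integral>\<^sup>+ t. ennreal (f t) * indicator {a..b} t \<partial>lborel) \<le>
      (\<integral>\<^sup>+ t. ennreal c * indicator {a..b} t +
        ennreal K * (ennreal (f t powr \<alpha>) * indicator {a..b} t) \<partial>lborel)"
    by (intro nn_integral_mono) (auto simp: indicator_def)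
  also have "\<dots> = ennreal (c * (b - a)) +
      ennreal K * (\<integral>\<^sup>+ t. ennreal (f t powr \<alpha>) * indicator {a..b} t \<partial>lborel)"
    using f assms(3,4)
    by (subst nn_integral_add) (auto simp: nn_integral_cmult_indicator nn_integral_cmult ennreal_mult)
  finally show ?thesis by (simp add: K_def)
qed

lemma powr_two_minus_inverse:
  fixes N \<alpha> :: real
  assumes "0 < N"
  shows "N * N powr (1 - 1 / \<alpha>) = N powr (2 - 1 / \<alpha>)"
proof -
  have "N powr (2 - 1 / \<alpha>) = N powr (1 + (1 - 1 / \<alpha>))" by simp
  also have "\<dots> = N powr 1 * N powr (1 - 1 / \<alpha>)" by (rule powr_add)
  finally show ?thesis using assms by simp
qed

lemma ennreal_div_le_of_le_add_mult:
  assumes "ennreal p \<le> ennreal q + ennreal K * E" "0 < K" "0 \<le> q" "q \<le> p"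
  shows "ennreal ((p - q) / K) \<le> E"
proof (cases E)
  case (real e)
  then have "ennreal p \<le> ennreal (q + K * e)"
    using assms by (simp add: ennreal_plus ennreal_mult)
  then have "p \<le> q + K * e"
    using real assms(2,3) by (metis ennreal_le_iff add_nonneg_nonneg mult_nonneg_nonneg less_imp_le)
  then show ?thesis
    unfolding real using assms(2) by (intro ennreal_leI) (simp add: pos_divide_le_eq mult.commute)
qed simp

lemma ennreal_inverse_antimono:
  fixes b c :: ennreal
  assumes "b \<le> c"
  shows "inverse c \<le> inverse b"
proof (cases b)
  case (real r)
  show ?thesis
  proof (cases "r = 0")
    case False
    with real assms show ?thesis
      by (cases c) (auto simp: inverse_ennreal ennreal_le_iff intro!: ennreal_leI le_imp_inverse_le)
  qed (simp add: real)
qed (use assms in \<open>simp add: top_unique\<close>)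

section \<open>Work, flow time and energy\<close>

definition flow_time ::
  "nat \<Rightarrow> nat \<Rightarrow> (nat \<Rightarrow> real) \<Rightarrow> (nat \<Rightarrow> real) \<Rightarrow> (nat \<Rightarrow> nat \<Rightarrow> real \<Rightarrow> real) \<Rightarrow> ennreal" where
  "flow_time m n r x w = (\<integral>\<^sup>+ t. ennreal (real (nalive m n r x w t)) \<partial>lborel)"

definition energy :: "nat \<Rightarrow> real \<Rightarrow> nat \<Rightarrow> (nat \<Rightarrow> nat \<Rightarrow> real \<Rightarrow> real) \<Rightarrow> ennreal" where
  "energy m \<alpha> n w = (\<integral>\<^sup>+ t. (\<Sum>k<m. ennreal ((\<Sum>i<n. w k i t) powr \<alpha>)) \<partial>lborel)"

lemma cost_eq_flow_time_plus_energy: "cost m \<alpha> n r x w = flow_time m n r x w + energy m \<alpha> n w"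
  unfolding cost_def flow_time_def energy_def ..

lemma feasible_scheduleD:
  assumes "feasible_schedule m n r w" "k < m" "i < n"
  shows "w k i \<in> borel_measurable borel" "0 \<le> w k i t" "t < r i \<Longrightarrow> w k i t = 0"
  using assms unfolding feasible_schedule_def by auto

lemma srpt_nonmig_rulesD:
  assumes "srpt_nonmig_rules m A" "valid_instance n r x" "A n r x = (w, a, d)"
  shows "feasible_schedule m n r w"
    and "i < n \<Longrightarrow> a i < m \<and> ereal (r i) \<le> d i"
    and "k < m \<Longrightarrow> i < n \<Longrightarrow> 0 < w k i t \<Longrightarrow> k = a i \<and> d i \<le> ereal t"
    and "i < n \<Longrightarrow> j < m \<Longrightarrow> x i < yval m n r x w a d i j \<Longrightarrow>
           d i = ereal (r i) \<and> x i < yval m n r x w a d i (a i)"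
  using assms unfolding srpt_nonmig_rules_def by fastforce+

lemma online_policyD:
  assumes "online_policy m A" "valid_instance n r x" "valid_instance n' r' x'"
    and "\<And>i. i < n \<and> r i \<le> t \<longleftrightarrow> i < n' \<and> r' i \<le> t"
    and "\<And>i. i < n \<Longrightarrow> r i \<le> t \<Longrightarrow> r' i = r i \<and> x' i = x i"
    and "A n r x = (w, a, d)" "A n' r' x' = (w', a', d')" "i < n" "r i \<le> t"
  shows "\<forall>k<m. \<forall>\<tau>\<le>t. w k i \<tau> = w' k i \<tau>"
    and "d i \<le> ereal t \<or> d' i \<le> ereal t \<Longrightarrow> d i = d' i \<and> a i = a' i"
proof -
  have "valid_instance n r x \<and> valid_instance n' r' x' \<and>
      (\<forall>i. i < n \<and> r i \<le> t \<longleftrightarrow> i < n' \<and> r' i \<le> t) \<and> (\<forall>i<n. r i \<le> t \<longrightarrow> r' i = r i \<and> x' i = x i)"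
    using assms(2-5) by blast
  then have "case A n r x of (w, a, d) \<Rightarrow> case A n' r' x' of (w', a', d') \<Rightarrow>
          (\<forall>i<n. r i \<le> t \<longrightarrow> (\<forall>k<m. \<forall>\<tau>\<le>t. w k i \<tau> = w' k i \<tau>) \<and>
             ((d i \<le> ereal t \<or> d' i \<le> ereal t) \<longrightarrow> d i = d' i \<and> a i = a' i))"
    by (rule assms(1)[unfolded online_policy_def, rule_format])
  then show "\<forall>k<m. \<forall>\<tau>\<le>t. w k i \<tau> = w' k i \<tau>"
    and "d i \<le> ereal t \<or> d' i \<le> ereal t \<Longrightarrow> d i = d' i \<and> a i = a' i"
    using assms(6-9) by auto
qed

lemma ratio_le_comp_ratio:
  assumes "valid_instance n r x"
  shows "cost m \<alpha> n r x (fst (A n r x)) / opt m \<alpha> n r x \<le> comp_ratio m \<alpha> A"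
  unfolding comp_ratio_def using assms by (intro SUP_upper2[of "(n, r, x)"]) auto

lemma work_mono:
  assumes "\<And>k s. k < m \<Longrightarrow> 0 \<le> w k i s" "t \<le> t'"
  shows "work m w i t \<le> work m w i t'"
  unfolding work_def using assms
  by (intro nn_integral_mono) (auto simp: indicator_def intro!: sum_nonneg)

lemma work_eq_if_agree_before:
  assumes "\<And>k \<tau>. k < m \<Longrightarrow> \<tau> < t \<Longrightarrow> w k i \<tau> = w' k i \<tau>"
  shows "work m w i t = work m w' i t"
  unfolding work_def using AE_lborel_singleton[of t]
  by (intro nn_integral_cong_AE) (auto elim!: eventually_mono simp: assms indicator_def)

lemma work_at_release:
  assumes "feasible_schedule m n r w" "i < n"
  shows "work m w i (r i) = 0"
proof -
  have "work m w i (r i) = work m (\<lambda>_ _ _. 0) i (r i)"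
    using feasible_scheduleD(3)[OF assms(1) _ assms(2)] by (intro work_eq_if_agree_before) auto
  then show ?thesis by (simp add: work_def)
qed

lemma flow_time_ge_unfinished:
  assumes U: "U \<subseteq> {..<n}" and rel: "\<And>i. i \<in> U \<Longrightarrow> r i \<le> t0"
    and nonneg: "\<And>k i s. k < m \<Longrightarrow> i \<in> U \<Longrightarrow> 0 \<le> w k i s"
    and unfinished: "\<And>i. i \<in> U \<Longrightarrow> work m w i T < ennreal (x i)" and "t0 \<le> T"
  shows "ennreal (real (card U) * (T - t0)) \<le> flow_time m n r x w"
proof -
  have "card U \<le> nalive m n r x w t" if "t \<in> {t0..T}" for t
  proof -
    have "U \<subseteq> {i. i < n \<and> r i \<le> t \<and> work m w i t < ennreal (x i)}"
    proof
      fix i assume i: "i \<in> U"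
      have "work m w i t \<le> work m w i T"
        using that nonneg[OF _ i] by (intro work_mono) auto
      then show "i \<in> {i. i < n \<and> r i \<le> t \<and> work m w i t < ennreal (x i)}"
        using U rel[OF i] unfinished[OF i] that i by fastforce
    qed
    then show ?thesis unfolding nalive_def by (intro card_mono) auto
  qed
  then have "ennreal (real (card U)) * indicator {t0..T} t \<le> ennreal (real (nalive m n r x w t))" for t
    by (cases "t \<in> {t0..T}") (auto intro: ennreal_leI)
  then have "(\<integral>\<^sup>+ t. ennreal (real (card U)) * indicator {t0..T} t \<partial>lborel) \<le> flow_time m n r x w"
    unfolding flow_time_def by (intro nn_integral_mono)
  then show ?thesis using assms(5) by (simp add: nn_integral_cmult_indicator ennreal_mult)
qed

lemma flow_time_eq_top_if_never_served:
  assumes "i < n" "0 < x i" "\<And>k \<tau>. k < m \<Longrightarrow> w k i \<tau> = 0"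
  shows "flow_time m n r x w = top"
proof (rule ccontr)
  assume "flow_time m n r x w \<noteq> top"
  then obtain f where f: "flow_time m n r x w = ennreal f" "0 \<le> f"
    by (cases "flow_time m n r x w") auto
  have "work m w i \<tau> = 0" for \<tau> by (simp add: work_def assms(3))
  then have "ennreal (real (card {i}) * (r i + f + 1 - r i)) \<le> ennreal f"
    unfolding f(1)[symmetric] using assms f(2) by (intro flow_time_ge_unfinished) auto
  then show False using f(2) by (simp add: ennreal_le_iff)
qed

section \<open>Unit-speed schedules bound the optimum\<close>

definition unit_speed_schedule ::
  "(nat \<Rightarrow> nat) \<Rightarrow> (nat \<Rightarrow> real) \<Rightarrow> (nat \<Rightarrow> real) \<Rightarrow> nat \<Rightarrow> nat \<Rightarrow> real \<Rightarrow> real" where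
  "unit_speed_schedule \<sigma> b x k i \<tau> = (if k = \<sigma> i then indicator {b i..<b i + x i} \<tau> else 0)"

lemma unit_speed_schedule_pos_iff:
  "0 < unit_speed_schedule \<sigma> b x k i \<tau> \<longleftrightarrow> k = \<sigma> i \<and> \<tau> \<in> {b i..<b i + x i}"
  by (simp add: unit_speed_schedule_def indicator_def)

lemma feasible_unit_speed_schedule:
  assumes "\<And>i. i < n \<Longrightarrow> \<sigma> i < m" "\<And>i. i < n \<Longrightarrow> r i \<le> b i"
    and disjoint: "\<And>i i' \<tau>. i < n \<Longrightarrow> i' < n \<Longrightarrow> i \<noteq> i' \<Longrightarrow> \<sigma> i = \<sigma> i' \<Longrightarrow>
        \<tau> \<in> {b i..<b i + x i} \<Longrightarrow> \<tau> \<notin> {b i'..<b i' + x i'}"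
  shows "feasible_schedule m n r (unit_speed_schedule \<sigma> b x)"
proof -
  have "unit_speed_schedule \<sigma> b x k i \<in> borel_measurable borel" for k i
    by (cases "k = \<sigma> i") (simp_all add: unit_speed_schedule_def[abs_def])
  moreover have "unit_speed_schedule \<sigma> b x k i \<tau> = 0" if "i < n" "\<tau> < r i" for k i \<tau>
    using assms(2)[OF that(1)] that by (simp add: unit_speed_schedule_def)
  moreover have "i = i'" if "i < n" "i' < n" "\<sigma> i = \<sigma> i'"
    "\<tau> \<in> {b i..<b i + x i}" "\<tau> \<in> {b i'..<b i' + x i'}" for i i' \<tau>
    using disjoint that by blast
  ultimately show ?thesis
    unfolding feasible_schedule_def unit_speed_schedule_pos_iff by (auto simp: unit_speed_schedule_def)
qed

lemma work_unit_speed_schedule: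
  assumes "\<sigma> i < m" "0 < x i" "b i + x i \<le> t"
  shows "work m (unit_speed_schedule \<sigma> b x) i t = ennreal (x i)"
proof -
  have "(\<Sum>k<m. unit_speed_schedule \<sigma> b x k i \<tau>) = indicator {b i..<b i + x i} \<tau>" for \<tau>
    using assms(1) by (simp add: unit_speed_schedule_def)
  then have "work m (unit_speed_schedule \<sigma> b x) i t = (\<integral>\<^sup>+ \<tau>. indicator {b i..<b i + x i} \<tau> \<partial>lborel)"
    unfolding work_def using assms(3) by (intro nn_integral_cong) (auto simp: indicator_def)
  then show ?thesis using assms(2) by simp
qed

lemma flow_time_unit_speed_schedule_le:
  assumes val: "valid_instance n r x" and "\<And>i. i < n \<Longrightarrow> \<sigma> i < m" "\<And>i. i < n \<Longrightarrow> r i \<le> b i"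
  shows "flow_time m n r x (unit_speed_schedule \<sigma> b x) \<le> ennreal (\<Sum>i<n. b i + x i - r i)"
proof -
  let ?w = "unit_speed_schedule \<sigma> b x"
  have x: "0 < x i" if "i < n" for i using val that by (simp add: valid_instance_def)
  have "real (nalive m n r x ?w t) \<le> (\<Sum>i<n. indicator {r i..<b i + x i} t)" for t
  proof -
    have alive: "t \<in> {r i..<b i + x i}" if "i < n" "r i \<le> t" "work m ?w i t < ennreal (x i)" for i
      using work_unit_speed_schedule[of \<sigma> i m x b t] assms(2)[of i] x[of i] that by force
    have "real (nalive m n r x ?w t) = (\<Sum>i<n. of_bool (r i \<le> t \<and> work m ?w i t < ennreal (x i)))"
      unfolding nalive_def by (simp add: Collect_conj_eq lessThan_def Int_commute)
    also have "\<dots> \<le> (\<Sum>i<n. indicator {r i..<b i + x i} t)"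
      using alive by (intro sum_mono) (auto simp: indicator_def)
    finally show ?thesis .
  qed
  then have "flow_time m n r x ?w \<le> (\<integral>\<^sup>+ t. ennreal (\<Sum>i<n. indicator {r i..<b i + x i} t) \<partial>lborel)"
    unfolding flow_time_def by (intro nn_integral_mono ennreal_leI)
  also have "\<dots> = (\<integral>\<^sup>+ t. (\<Sum>i<n. indicator {r i..<b i + x i} t) \<partial>lborel)"
    by (intro nn_integral_cong) (simp add: sum_ennreal flip: ennreal_indicator)
  also have "\<dots> = (\<Sum>i<n. ennreal (b i + x i - r i))"
    using assms(3) x by (subst nn_integral_sum) (auto intro!: sum.cong simp: less_imp_le add_increasing2)
  also have "\<dots> = ennreal (\<Sum>i<n. b i + x i - r i)"
    using assms(3) x by (intro sum_ennreal) (auto intro: add_increasing2 less_imp_le)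
  finally show ?thesis .
qed

lemma unit_speed_schedule_server_speed:
  assumes "\<And>i i' \<tau>. i < n \<Longrightarrow> i' < n \<Longrightarrow> i \<noteq> i' \<Longrightarrow> \<sigma> i = \<sigma> i' \<Longrightarrow>
        \<tau> \<in> {b i..<b i + x i} \<Longrightarrow> \<tau> \<notin> {b i'..<b i' + x i'}"
  shows "(\<Sum>i<n. unit_speed_schedule \<sigma> b x k i \<tau>) \<in> {0, 1}"
proof (cases "\<exists>i0<n. unit_speed_schedule \<sigma> b x k i0 \<tau> = 1")
  case True
  then obtain i0 where i0: "i0 < n" "unit_speed_schedule \<sigma> b x k i0 \<tau> = 1" by blast
  have "unit_speed_schedule \<sigma> b x k i \<tau> = 0" if "i < n" "i \<noteq> i0" for i
    using i0 that assms[of i0 i \<tau>]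
    by (auto simp: unit_speed_schedule_def indicator_def split: if_splits)
  then have "(\<Sum>i<n. unit_speed_schedule \<sigma> b x k i \<tau>) = 1"
    using i0 by (subst sum.remove[of _ i0]) (auto intro!: sum.neutral)
  then show ?thesis by simp
next
  case False
  then have "(\<Sum>i<n. unit_speed_schedule \<sigma> b x k i \<tau>) = 0"
    by (intro sum.neutral) (auto simp: unit_speed_schedule_def indicator_def)
  then show ?thesis by simp
qed

lemma energy_unit_speed_schedule:
  assumes val: "valid_instance n r x" and "\<And>i. i < n \<Longrightarrow> \<sigma> i < m"
    and disjoint: "\<And>i i' \<tau>. i < n \<Longrightarrow> i' < n \<Longrightarrow> i \<noteq> i' \<Longrightarrow> \<sigma> i = \<sigma> i' \<Longrightarrow>
        \<tau> \<in> {b i..<b i + x i} \<Longrightarrow> \<tau> \<notin> {b i'..<b i' + x i'}"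
  shows "energy m \<alpha> n (unit_speed_schedule \<sigma> b x) = ennreal (\<Sum>i<n. x i)"
proof -
  let ?w = "unit_speed_schedule \<sigma> b x"
  have x: "0 < x i" if "i < n" for i using val that by (simp add: valid_instance_def)
  \<comment> \<open>each server runs at speed 0 or 1, so the power equals the speed\<close>
  have speed01: "(\<Sum>i<n. ?w k i \<tau>) \<in> {0, 1}" for k \<tau>
    by (rule unit_speed_schedule_server_speed) (rule disjoint; assumption)+
  have "energy m \<alpha> n ?w = (\<integral>\<^sup>+ \<tau>. ennreal (\<Sum>k<m. \<Sum>i<n. ?w k i \<tau>) \<partial>lborel)"
    unfolding energy_def
  proof (intro nn_integral_cong)
    fix \<tau>
    have "(\<Sum>i<n. ?w k i \<tau>) powr \<alpha> = (\<Sum>i<n. ?w k i \<tau>)" for k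
      using speed01[of k \<tau>] by auto
    moreover have "0 \<le> (\<Sum>i<n. ?w k i \<tau>)" for k
      by (intro sum_nonneg) (simp add: unit_speed_schedule_def)
    ultimately show "(\<Sum>k<m. ennreal ((\<Sum>i<n. ?w k i \<tau>) powr \<alpha>)) = ennreal (\<Sum>k<m. \<Sum>i<n. ?w k i \<tau>)"
      by (subst sum_ennreal) auto
  qed
  also have "\<dots> = (\<integral>\<^sup>+ \<tau>. (\<Sum>i<n. ennreal (indicator {b i..<b i + x i} \<tau>)) \<partial>lborel)"
  proof (intro nn_integral_cong)
    fix \<tau>
    have "(\<Sum>k<m. \<Sum>i<n. ?w k i \<tau>) = (\<Sum>i<n. indicator {b i..<b i + x i} \<tau>)"
      using assms(2) by (subst sum.swap) (auto intro!: sum.cong simp: unit_speed_schedule_def)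
    then show "ennreal (\<Sum>k<m. \<Sum>i<n. ?w k i \<tau>) = (\<Sum>i<n. ennreal (indicator {b i..<b i + x i} \<tau>))"
      by (simp add: sum_ennreal)
  qed
  also have "\<dots> = (\<Sum>i<n. ennreal (x i))"
    using x by (subst nn_integral_sum) (auto intro!: sum.cong simp: ennreal_indicator less_imp_le)
  also have "\<dots> = ennreal (\<Sum>i<n. x i)"
    using x by (intro sum_ennreal) (auto intro: less_imp_le)
  finally show ?thesis .
qed

lemma opt_le_unit_speed_schedule:
  assumes "valid_instance n r x" "\<And>i. i < n \<Longrightarrow> \<sigma> i < m" "\<And>i. i < n \<Longrightarrow> r i \<le> b i"
    and "\<And>i i' \<tau>. i < n \<Longrightarrow> i' < n \<Longrightarrow> i \<noteq> i' \<Longrightarrow> \<sigma> i = \<sigma> i' \<Longrightarrow>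
        \<tau> \<in> {b i..<b i + x i} \<Longrightarrow> \<tau> \<notin> {b i'..<b i' + x i'}"
  shows "opt m \<alpha> n r x \<le> ennreal (\<Sum>i<n. b i + 2 * x i - r i)"
proof -
  let ?w = "unit_speed_schedule \<sigma> b x"
  have x: "0 < x i" if "i < n" for i using assms(1) that by (simp add: valid_instance_def)
  have "feasible_schedule m n r ?w"
    by (rule feasible_unit_speed_schedule) (rule assms; assumption)+
  then have "opt m \<alpha> n r x \<le> cost m \<alpha> n r x ?w"
    unfolding opt_def by (intro INF_lower) auto
  also have "\<dots> \<le> ennreal (\<Sum>i<n. b i + x i - r i) + ennreal (\<Sum>i<n. x i)"
  proof -
    have "flow_time m n r x ?w \<le> ennreal (\<Sum>i<n. b i + x i - r i)"
      by (rule flow_time_unit_speed_schedule_le) (rule assms; assumption)+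
    moreover have "energy m \<alpha> n ?w = ennreal (\<Sum>i<n. x i)"
      by (rule energy_unit_speed_schedule) (rule assms; assumption)+
    ultimately show ?thesis unfolding cost_eq_flow_time_plus_energy by (simp add: add_right_mono)
  qed
  also have "\<dots> = ennreal ((\<Sum>i<n. b i + x i - r i) + (\<Sum>i<n. x i))"
    using assms(3) x by (intro ennreal_plus[symmetric] sum_nonneg) (auto intro: add_increasing2 less_imp_le)
  also have "(\<Sum>i<n. b i + x i - r i) + (\<Sum>i<n. x i) = (\<Sum>i<n. b i + 2 * x i - r i)"
    by (simp add: sum.distrib[symmetric] algebra_simps)
  finally show ?thesis .
qed

section \<open>A batch served by a single server\<close>

lemma nn_integral_powr_le_energy:
  assumes "j < m" "\<And>\<tau>. 0 \<le> s \<tau>" "\<And>\<tau>. s \<tau> \<le> (\<Sum>i<n. w j i \<tau>)" "0 \<le> \<alpha>"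
  shows "(\<integral>\<^sup>+ \<tau>. ennreal (s \<tau> powr \<alpha>) * indicator A \<tau> \<partial>lborel) \<le> energy m \<alpha> n w"
  unfolding energy_def
proof (intro nn_integral_mono)
  fix \<tau>
  have "ennreal (s \<tau> powr \<alpha>) \<le> ennreal ((\<Sum>i<n. w j i \<tau>) powr \<alpha>)"
    using assms(2-4) by (intro ennreal_leI powr_mono2) auto
  also have "\<dots> \<le> (\<Sum>k<m. ennreal ((\<Sum>i<n. w k i \<tau>) powr \<alpha>))"
    using assms(1) by (intro member_le_sum) auto
  finally show "ennreal (s \<tau> powr \<alpha>) * indicator A \<tau> \<le> (\<Sum>k<m. ennreal ((\<Sum>i<n. w k i \<tau>) powr \<alpha>))"
    by (simp add: indicator_def)
qed

lemma batch_work_le_linear_plus_energy: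
  assumes feas: "feasible_schedule m n r w" and J: "J \<subseteq> {..<n}" and j: "j < m"
    and only_j: "\<And>i k \<tau>. i \<in> J \<Longrightarrow> k < m \<Longrightarrow> 0 < w k i \<tau> \<Longrightarrow> k = j"
    and idle: "\<And>i \<tau>. i \<in> J \<Longrightarrow> \<tau> < a \<Longrightarrow> w j i \<tau> = 0"
    and "a \<le> b" "0 < c" "1 < \<alpha>"
  shows "(\<Sum>i\<in>J. work m w i b) \<le>
    ennreal (c * (b - a)) + ennreal (1 / c powr (\<alpha> - 1)) * energy m \<alpha> n w"
proof -
  note wD = feasible_scheduleD[OF feas]
  define s where "s = (\<lambda>\<tau>. \<Sum>i\<in>J. w j i \<tau>)"
  have s_nonneg: "0 \<le> s \<tau>" for \<tau>
    unfolding s_def using wD(2) j J by (auto intro!: sum_nonneg)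
  have s_meas: "s \<in> borel_measurable borel"
    unfolding s_def using wD(1) j J by (intro borel_measurable_sum) auto
  have work_eq: "work m w i b = (\<integral>\<^sup>+ \<tau>. ennreal (w j i \<tau>) * indicator {a..b} \<tau> \<partial>lborel)"
    if i: "i \<in> J" for i
  proof -
    have "(\<Sum>k<m. w k i \<tau>) = w j i \<tau>" for \<tau>
      using j only_j[OF i] wD(2) i J by (intro sum_eq_single_nonneg) auto
    then show ?thesis
      unfolding work_def using idle[OF i] by (intro nn_integral_cong) (auto simp: indicator_def not_le)
  qed
  have "(\<Sum>i\<in>J. work m w i b) =
      (\<Sum>i\<in>J. \<integral>\<^sup>+ \<tau>. ennreal (w j i \<tau>) * indicator {a..b} \<tau> \<partial>lborel)"
    using work_eq by (rule sum.cong[OF refl])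
  also have "\<dots> = (\<integral>\<^sup>+ \<tau>. (\<Sum>i\<in>J. ennreal (w j i \<tau>) * indicator {a..b} \<tau>) \<partial>lborel)"
    using wD(1) j J by (intro nn_integral_sum[symmetric]) auto
  also have "\<dots> = (\<integral>\<^sup>+ \<tau>. ennreal (s \<tau>) * indicator {a..b} \<tau> \<partial>lborel)"
  proof (intro nn_integral_cong)
    fix \<tau>
    have "(\<Sum>i\<in>J. ennreal (w j i \<tau>)) = ennreal (s \<tau>)"
      unfolding s_def using wD(2) j J by (intro sum_ennreal) auto
    then show "(\<Sum>i\<in>J. ennreal (w j i \<tau>) * indicator {a..b} \<tau>) = ennreal (s \<tau>) * indicator {a..b} \<tau>"
      by (simp add: sum_distrib_right[symmetric])
  qed
  also have "\<dots> \<le> ennreal (c * (b - a)) + ennreal (1 / c powr (\<alpha> - 1)) *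
      (\<integral>\<^sup>+ \<tau>. ennreal (s \<tau> powr \<alpha>) * indicator {a..b} \<tau> \<partial>lborel)"
    using s_meas s_nonneg assms(6-8) by (rule nn_integral_le_linear_plus_powr)
  also have "(\<integral>\<^sup>+ \<tau>. ennreal (s \<tau> powr \<alpha>) * indicator {a..b} \<tau> \<partial>lborel) \<le> energy m \<alpha> n w"
    using j s_nonneg assms(8) unfolding s_def
    by (intro nn_integral_powr_le_energy) (use J wD(2) j in \<open>auto intro!: sum_mono2\<close>)
  then have "ennreal (c * (b - a)) + ennreal (1 / c powr (\<alpha> - 1)) *
      (\<integral>\<^sup>+ \<tau>. ennreal (s \<tau> powr \<alpha>) * indicator {a..b} \<tau> \<partial>lborel) \<le>
      ennreal (c * (b - a)) + ennreal (1 / c powr (\<alpha> - 1)) * energy m \<alpha> n w"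
    by (intro add_left_mono mult_left_mono) auto
  finally show ?thesis .
qed

lemma energy_ge_of_batch_work:
  assumes feas: "feasible_schedule m n r w" and J: "J \<subseteq> {..<n}" and "1 \<le> N" and j: "j < m"
    and rel: "\<And>i. i \<in> J \<Longrightarrow> r i = t0"
    and only_j: "\<And>i k \<tau>. i \<in> J \<Longrightarrow> k < m \<Longrightarrow> 0 < w k i \<tau> \<Longrightarrow> k = j" and \<alpha>: "1 < \<alpha>"
    and worked: "ennreal (real N / 16) \<le> (\<Sum>i\<in>J. work m w i (t0 + real N powr (1 - 1 / \<alpha>)))"
  shows "ennreal (real N powr (2 - 1 / \<alpha>) / 32 powr \<alpha>) \<le> energy m \<alpha> n w"
proof -
  define L where "L = real N powr (1 - 1 / \<alpha>)"
  define c where "c = real N powr (1 / \<alpha>) / 32"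
  have N: "0 < real N" using \<open>1 \<le> N\<close> by simp
  have L: "0 < L" and c: "0 < c" using N by (simp_all add: L_def c_def)
  have "w j i \<tau> = 0" if "i \<in> J" "\<tau> < t0" for i \<tau>
    using feasible_scheduleD(3)[OF feas j, of i \<tau>] J rel[of i] that by auto
  then have "(\<Sum>i\<in>J. work m w i (t0 + L)) \<le> ennreal (c * L) + ennreal (1 / c powr (\<alpha> - 1)) * energy m \<alpha> n w"
    using batch_work_le_linear_plus_energy[OF feas J j only_j, where a = t0 and b = "t0 + L"] c \<alpha> L
    by simp
  also have "c * L = real N / 32"
    unfolding c_def L_def using powr_add[of "real N" "1 / \<alpha>" "1 - 1 / \<alpha>"] N by simp
  finally have "ennreal ((real N / 16 - real N / 32) / (1 / c powr (\<alpha> - 1))) \<le> energy m \<alpha> n w"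
    using worked c unfolding L_def by (intro ennreal_div_le_of_le_add_mult) auto
  moreover have "(real N / 16 - real N / 32) / (1 / c powr (\<alpha> - 1)) = real N powr (2 - 1 / \<alpha>) / 32 powr \<alpha>"
  proof -
    have "c powr (\<alpha> - 1) * 32 powr (\<alpha> - 1) = L"
      using \<alpha> by (simp add: c_def L_def powr_divide powr_powr field_simps)
    moreover have "(32::real) powr \<alpha> = 32 * 32 powr (\<alpha> - 1)"
      using powr_add[of "32::real" 1 "\<alpha> - 1"] by simp
    ultimately show ?thesis
      unfolding powr_two_minus_inverse[OF N, symmetric] L_def[symmetric] by (simp add: field_simps)
  qed
  ultimately show ?thesis by simp
qed

lemma cost_ge_batch_on_one_server:
  assumes feas: "feasible_schedule m n r w" and J: "J \<subseteq> {..<n}" "card J = N" "1 \<le> N"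
    and j: "j < m" and rel: "\<And>i. i \<in> J \<Longrightarrow> r i = t0" and size: "\<And>i. i \<in> J \<Longrightarrow> 1 / 8 \<le> x i"
    and only_j: "\<And>i k \<tau>. i \<in> J \<Longrightarrow> k < m \<Longrightarrow> 0 < w k i \<tau> \<Longrightarrow> k = j" and \<alpha>: "1 < \<alpha>"
  shows "ennreal (real N powr (2 - 1 / \<alpha>) / 32 powr \<alpha>) \<le> cost m \<alpha> n r x w"
proof -
  have finJ: "finite J" using J(1) finite_subset by blast
  define B where "B = real N powr (2 - 1 / \<alpha>) / 32 powr \<alpha>"
  define L where "L = real N powr (1 - 1 / \<alpha>)"
  define S where "S = {i \<in> J. ennreal (x i) \<le> work m w i (t0 + L)}"
  have L: "0 < L" using J(3) by (simp add: L_def)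
  have "card S + card (J - S) = N"
    using finJ J(2) by (metis S_def card_Diff_subset card_mono add_diff_inverse_nat mem_Collect_eq
        not_less subsetI finite_subset)
  then consider "real N / 2 \<le> real (card S)" | "real N / 2 \<le> real (card (J - S))" by linarith
  then have "ennreal B \<le> flow_time m n r x w + energy m \<alpha> n w"
  proof cases
    case 1
    \<comment> \<open>half the batch is finished within the window of length \<open>L\<close>: that much work this fast costs energy\<close>
    have "ennreal (real N / 16) \<le> (\<Sum>i\<in>S. ennreal (1 / 8))"
      using 1 by (simp add: ennreal_of_nat_eq_real_of_nat flip: ennreal_mult)
    also have "\<dots> \<le> (\<Sum>i\<in>S. work m w i (t0 + L))"
    proof (intro sum_mono)
      fix i assume "i \<in> S"
      then have "i \<in> J" "ennreal (x i) \<le> work m w i (t0 + L)" by (auto simp: S_def)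
      then show "ennreal (1 / 8) \<le> work m w i (t0 + L)"
        using ennreal_leI[OF size] order_trans by metis
    qed
    also have "\<dots> \<le> (\<Sum>i\<in>J. work m w i (t0 + L))"
      using finJ by (intro sum_mono2) (auto simp: S_def)
    finally have "ennreal B \<le> energy m \<alpha> n w"
      unfolding B_def L_def using energy_ge_of_batch_work[of m n r w J N j t0 \<alpha>] feas J j rel only_j \<alpha>
      by blast
    then show ?thesis by (simp add: add_increasing)
  next
    case 2
    \<comment> \<open>otherwise half the batch stays alive during the whole window\<close>
    have "(2::real) \<le> 32 powr \<alpha>"
      using powr_mono[of 1 \<alpha> "32::real"] \<alpha> by simp
    have "B = real N * L / 32 powr \<alpha>"
      using powr_two_minus_inverse[of "real N" \<alpha>] J(3) by (simp add: B_def L_def)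
    also have "\<dots> \<le> real N * L / 2"
      using \<open>2 \<le> 32 powr \<alpha>\<close> L by (intro divide_left_mono) auto
    also have "\<dots> \<le> real (card (J - S)) * (t0 + L - t0)"
      using mult_right_mono[OF 2 less_imp_le[OF L]] by simp
    finally have "ennreal B \<le> ennreal (real (card (J - S)) * (t0 + L - t0))"
      by (rule ennreal_leI)
    also have "\<dots> \<le> flow_time m n r x w"
      using J(1) rel feasible_scheduleD(2)[OF feas] L by (intro flow_time_ge_unfinished) (auto simp: S_def not_le)
    finally show ?thesis by (simp add: add_increasing2)
  qed
  then show ?thesis unfolding B_def cost_eq_flow_time_plus_energy .
qed

section \<open>The adversary\<close>

lemma yval_gt_if_queued_gt:
  assumes "l0 \<in> queued m n r x w a d i j"
    and "\<And>l. l \<in> queued m n r x w a d i j \<Longrightarrow> y < x l - enn2real (work m w l (r i))"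
  shows "y < yval m n r x w a d i j"
proof -
  have "finite (queued m n r x w a d i j)" unfolding queued_def by simp
  with assms show ?thesis by (auto simp: yval_def Let_def Min_gr_iff)
qed

lemma srpt_nonmig_rules_batch_joins_blocked_server:
  assumes rul: "srpt_nonmig_rules m A" and val: "valid_instance n r x" and A: "A n r x = (w, a, d)"
    and "0 < n" "d 0 \<le> ereal t"
    and rel: "\<And>i. 0 < i \<Longrightarrow> i < n \<Longrightarrow> r i = t"
    and decreasing: "\<And>i l. 0 < l \<Longrightarrow> l < i \<Longrightarrow> i < n \<Longrightarrow> x i < x l"
    and blocked: "\<And>i. 0 < i \<Longrightarrow> i < n \<Longrightarrow> work m w 0 t < ennreal (x 0 - x i)"
    and "0 < i" "i < n"
  shows "a i = a 0"
  using \<open>0 < i\<close> \<open>i < n\<close>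
proof (induction i rule: less_induct)
  case (less i)
  note R = srpt_nonmig_rulesD[OF rul val A]
  let ?Q = "queued m n r x w a d i"
  have ri: "r i = t" using less.prems rel by simp
  have earlier: "l < i" if "0 < l" "l < n" "r l < r i \<or> (r l = r i \<and> l < i)" for l
    using that rel[of l] ri by auto
  have other_idle: "yval m n r x w a d i k = 0" if "k \<noteq> a 0" for k
  proof -
    have "?Q k = {}"
    proof (intro equals0I)
      fix l assume l: "l \<in> ?Q k"
      then have "l < n" "a l = k" "r l < r i \<or> (r l = r i \<and> l < i)"
        unfolding queued_def by auto
      then show False
        using that earlier[of l] less.IH[of l] less.prems by (cases "l = 0") auto
    qed
    then show ?thesis by (simp add: yval_def)
  qed
  \<comment> \<open>job \<open>0\<close> and the earlier jobs of the batch are queued at \<open>a 0\<close>, all with more remaining work than \<open>x i\<close>\<close>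
  have "x i < yval m n r x w a d i (a 0)"
  proof -
    obtain u where u: "work m w 0 t = ennreal u" "0 \<le> u"
      using blocked[OF less.prems] by (cases "work m w 0 t") auto
    then have "u < x 0 - x i"
      using blocked[OF less.prems] by (simp add: ennreal_less_iff)
    moreover have "0 < x i" using val less.prems by (simp add: valid_instance_def)
    ultimately have work0: "enn2real (work m w 0 t) < x 0 - x i" "work m w 0 t < ennreal (x 0)"
      using u by (auto simp: ennreal_less_iff)
    have "r 0 \<le> t"
      using R(2)[OF \<open>0 < n\<close>] \<open>d 0 \<le> ereal t\<close> by (metis ereal_less_eq(3) order_trans)
    then have "0 \<in> ?Q (a 0)"
      using \<open>d 0 \<le> ereal t\<close> work0(2) less.prems ri by (auto simp: queued_def)
    then show ?thesis
    proof (rule yval_gt_if_queued_gt)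
      fix l assume "l \<in> ?Q (a 0)"
      show "x i < x l - enn2real (work m w l (r i))"
      proof (cases "l = 0")
        case True
        then show ?thesis using work0(1) ri by simp
      next
        case False
        with \<open>l \<in> ?Q (a 0)\<close> have "l < i" "l < n" using earlier unfolding queued_def by auto
        then show ?thesis
          using False decreasing[of l i] less.prems work_at_release[OF R(1), of l] rel[of l] ri by simp
      qed
    qed
  qed
  then have "x i < yval m n r x w a d i (a i)"
    using R(4)[OF less.prems(2)] R(2)[OF \<open>0 < n\<close>] by blast
  moreover have "0 < x i" using val less.prems by (simp add: valid_instance_def)
  ultimately show ?case using other_idle[of "a i"] by fastforce
qed

lemma unit_job_slow_start:
  assumes rul: "srpt_nonmig_rules m A" and A: "A 1 (\<lambda>_. 0) (\<lambda>_. 1) = (w, a, d)"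
    and finite_cost: "cost m \<alpha> 1 (\<lambda>_. 0) (\<lambda>_. 1) w \<noteq> top" and \<alpha>: "1 < \<alpha>"
  obtains D t where "d 0 = ereal D" "0 \<le> D" "D < t" "work m w 0 t \<le> ennreal (1 / 2)"
proof -
  have val: "valid_instance 1 (\<lambda>_. 0) (\<lambda>_. 1)" by (simp add: valid_instance_def)
  note R = srpt_nonmig_rulesD[OF rul val A]
  have j: "a 0 < m" and d0: "0 \<le> d 0" using R(2)[of 0] by (auto simp: zero_ereal_def)
  have nonneg: "\<And>k \<tau>. k < m \<Longrightarrow> 0 \<le> w k 0 \<tau>" using feasible_scheduleD(2)[OF R(1)] by simp
  have served: "\<And>k \<tau>. k < m \<Longrightarrow> 0 < w k 0 \<tau> \<Longrightarrow> k = a 0 \<and> d 0 \<le> ereal \<tau>"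
    using R(3) by simp
  obtain e where e: "energy m \<alpha> 1 w = ennreal e" "0 \<le> e"
    using finite_cost unfolding cost_eq_flow_time_plus_energy by (cases "energy m \<alpha> 1 w") auto
  have "d 0 \<noteq> \<infinity>"
  proof
    assume "d 0 = \<infinity>"
    then have "w k 0 \<tau> = 0" if "k < m" for k \<tau>
      using served[OF that, of \<tau>] nonneg[OF that, of \<tau>] by force
    then have "flow_time m 1 (\<lambda>_. 0) (\<lambda>_. 1) w = top"
      by (intro flow_time_eq_top_if_never_served) auto
    with finite_cost show False by (simp add: cost_eq_flow_time_plus_energy)
  qed
  then obtain D where D: "d 0 = ereal D" "0 \<le> D" using d0 by (cases "d 0") auto
  \<comment> \<open>shortly after dispatch, only little work can have been done at bounded energy\<close>
  define c where "c = (4 * e + 1) powr (1 / (\<alpha> - 1))"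
  have c: "0 < c" "c powr (\<alpha> - 1) = 4 * e + 1"
    using e(2) \<alpha> by (auto simp: c_def powr_powr)
  have "work m w 0 (D + 1 / (4 * c)) = (\<Sum>i\<in>{0}. work m w i (D + 1 / (4 * c)))" by simp
  also have "\<dots> \<le> ennreal (c * (D + 1 / (4 * c) - D)) + ennreal (1 / c powr (\<alpha> - 1)) * energy m \<alpha> 1 w"
  proof (rule batch_work_le_linear_plus_energy[OF R(1) _ j])
    show "w (a 0) i \<tau> = 0" if "i \<in> {0}" "\<tau> < D" for i \<tau>
      using served[OF j, of \<tau>] nonneg[OF j, of \<tau>] D(1) that by force
  qed (use served c(1) \<alpha> in auto)
  also have "\<dots> = ennreal (1 / 4 + e / (4 * e + 1))"
    using c e by (simp add: ennreal_plus ennreal_mult[symmetric])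
  also have "\<dots> \<le> ennreal (1 / 2)"
  proof (intro ennreal_leI)
    have "e / (4 * e + 1) \<le> 1 / 4" using e(2) by (simp add: divide_le_eq)
    then show "1 / 4 + e / (4 * e + 1) \<le> 1 / 2" by linarith
  qed
  finally have "work m w 0 (D + 1 / (4 * c)) \<le> ennreal (1 / 2)" .
  moreover have "D < D + 1 / (4 * c)" using c(1) by simp
  ultimately show ?thesis using that D by blast
qed

(* Job 0 is the unit job of the first instance; the batch released at t has strictly decreasing
   sizes in [1/8, 1/4], so every newcomer is smaller than every job already queued. *)

definition batch_release :: "real \<Rightarrow> nat \<Rightarrow> real" where
  "batch_release t i = (if i = 0 then 0 else t)"

definition batch_size :: "nat \<Rightarrow> real" where
  "batch_size i = (if i = 0 then 1 else 1 / 8 + 1 / (8 * real i))"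

lemma batch_size_bounds: "0 < i \<Longrightarrow> 1 / 8 \<le> batch_size i \<and> batch_size i \<le> 1 / 4"
  by (simp add: batch_size_def field_simps)

lemma batch_size_decreasing: "0 < l \<Longrightarrow> l < i \<Longrightarrow> batch_size i < batch_size l"
  by (simp add: batch_size_def field_simps)

lemma valid_batch_instance: "0 \<le> t \<Longrightarrow> valid_instance n (batch_release t) batch_size"
  by (simp add: valid_instance_def batch_release_def batch_size_def add_pos_nonneg)

lemma opt_batch_le:
  assumes "1 \<le> m" "0 \<le> t"
  shows "opt m \<alpha> (Suc m) (batch_release t) batch_size \<le> ennreal (6 * real m)"
proof -
  \<comment> \<open>job \<open>0\<close> at once on server \<open>0\<close>, job \<open>i > 0\<close> at time \<open>t + 1\<close> on server \<open>i - 1\<close>\<close>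
  define \<sigma> :: "nat \<Rightarrow> nat" where "\<sigma> i = i - 1" for i
  define b :: "nat \<Rightarrow> real" where "b i = (if i = 0 then 0 else t + 1)" for i
  have "opt m \<alpha> (Suc m) (batch_release t) batch_size \<le>
      ennreal (\<Sum>i<Suc m. b i + 2 * batch_size i - batch_release t i)"
  proof (rule opt_le_unit_speed_schedule)
    show "valid_instance (Suc m) (batch_release t) batch_size"
      using assms(2) by (rule valid_batch_instance)
    show "\<sigma> i < m" if "i < Suc m" for i
      using that assms(1) by (simp add: \<sigma>_def)
    show "batch_release t i \<le> b i" for i
      using assms(2) by (simp add: batch_release_def b_def)
    show "\<tau> \<notin> {b i'..<b i' + batch_size i'}"
      if "i \<noteq> i'" "\<sigma> i = \<sigma> i'" "\<tau> \<in> {b i..<b i + batch_size i}" for i i' \<tau>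
    proof -
      have "i = 0 \<or> i' = 0" using that(1,2) by (auto simp: \<sigma>_def)
      then show ?thesis using that assms(2) by (auto simp: b_def batch_size_def)
    qed
  qed
  also have "\<dots> \<le> ennreal (\<Sum>i<Suc m. 3)"
  proof (intro ennreal_leI sum_mono)
    fix i
    show "b i + 2 * batch_size i - batch_release t i \<le> 3"
      using batch_size_bounds[of i] by (cases "i = 0") (simp_all add: b_def batch_release_def batch_size_def)
  qed
  also have "\<dots> \<le> ennreal (6 * real m)"
    using assms(1) by (intro ennreal_leI) simp
  finally show ?thesis .
qed

lemma batch_cost_ge:
  assumes pol: "srpt_nonmig_policy m A" and A1: "A 1 (\<lambda>_. 0) (\<lambda>_. 1) = (w1, a1, d1)"
    and D: "d1 0 = ereal D" "0 \<le> D" "D < t" and slow: "work m w1 0 t \<le> ennreal (1 / 2)"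
    and m: "1 \<le> m" and \<alpha>: "1 < \<alpha>"
  shows "ennreal (real m powr (2 - 1 / \<alpha>) / 32 powr \<alpha>) \<le>
    cost m \<alpha> (Suc m) (batch_release t) batch_size (fst (A (Suc m) (batch_release t) batch_size))"
proof -
  obtain w a d where A2: "A (Suc m) (batch_release t) batch_size = (w, a, d)"
    by (cases "A (Suc m) (batch_release t) batch_size") auto
  have rul: "srpt_nonmig_rules m A" and onl: "online_policy m A"
    using pol by (auto simp: srpt_nonmig_policy_def)
  have val1: "valid_instance 1 (\<lambda>_. 0) (\<lambda>_. 1)" by (simp add: valid_instance_def)
  have val2: "valid_instance (Suc m) (batch_release t) batch_size"
    using D by (intro valid_batch_instance) simp
  note R2 = srpt_nonmig_rulesD[OF rul val2 A2]
  note same_past = online_policyD[OF onl val1 val2 _ _ A1 A2, of _ 0]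
  have past: "\<forall>k<m. \<forall>\<tau>\<le>t'. w1 k 0 \<tau> = w k 0 \<tau>" "d 0 = d1 0 \<and> a 0 = a1 0"
    if "D \<le> t'" "t' < t" for t'
    using same_past[of t'] that D by (auto simp: batch_release_def batch_size_def)
  have "work m w 0 t = work m w1 0 t"
    using past(1)[of "max \<tau> D" for \<tau>] D by (intro work_eq_if_agree_before) auto
  have joins: "a i = a 0" if "0 < i" "i < Suc m" for i
  proof (rule srpt_nonmig_rules_batch_joins_blocked_server[OF rul val2 A2 _ _ _ _ _ that])
    show "d 0 \<le> ereal t" using past(2)[of D] D by simp
    show "work m w 0 t < ennreal (batch_size 0 - batch_size i)" if "0 < i" for i
    proof -
      have "ennreal (1 / 2) < ennreal (batch_size 0 - batch_size i)"
        using batch_size_bounds[OF that] by (intro ennreal_lessI) (simp_all add: batch_size_def)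
      then show ?thesis using slow \<open>work m w 0 t = work m w1 0 t\<close> by simp
    qed
  qed (auto simp: batch_release_def batch_size_decreasing)
  have "ennreal (real m powr (2 - 1 / \<alpha>) / 32 powr \<alpha>) \<le> cost m \<alpha> (Suc m) (batch_release t) batch_size w"
  proof (intro cost_ge_batch_on_one_server[OF R2(1), of "{1..m}" m "a 0" t])
    show "k = a 0" if "i \<in> {1..m}" "k < m" "0 < w k i \<tau>" for i k \<tau>
      using R2(3)[of k i \<tau>] joins[of i] that by auto
  qed (use m \<alpha> batch_size_bounds R2(2)[of 0] in \<open>auto simp: batch_release_def\<close>)
  then show ?thesis using A2 by simp
qed

lemma comp_ratio_ge_srpt_nonmig:
  assumes \<alpha>: "1 < \<alpha>" and m: "1 \<le> m" and pol: "srpt_nonmig_policy m A"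
  shows "ennreal (real m powr (1 - 1 / \<alpha>) / (6 * 32 powr \<alpha>)) \<le> comp_ratio m \<alpha> A"
proof -
  have rul: "srpt_nonmig_rules m A" using pol by (simp add: srpt_nonmig_policy_def)
  obtain w1 a1 d1 where A1: "A 1 (\<lambda>_. 0) (\<lambda>_. 1) = (w1, a1, d1)" by (cases "A 1 (\<lambda>_. 0) (\<lambda>_. 1)") auto
  show ?thesis
  proof (cases "cost m \<alpha> 1 (\<lambda>_. 0) (\<lambda>_. 1) w1 = top")
    case True
    have "opt m \<alpha> 1 (\<lambda>_. 0) (\<lambda>_. 1) \<le> ennreal (0 + 2 * 1 - 0)"
      using m opt_le_unit_speed_schedule[of 1 "\<lambda>_. 0" "\<lambda>_. 1" "\<lambda>_. 0" m "\<lambda>_. 0"]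
      by (simp add: valid_instance_def)
    then have "cost m \<alpha> 1 (\<lambda>_. 0) (\<lambda>_. 1) (fst (A 1 (\<lambda>_. 0) (\<lambda>_. 1))) / opt m \<alpha> 1 (\<lambda>_. 0) (\<lambda>_. 1) = top"
      using True A1 by (auto simp: ennreal_top_divide top_unique)
    then show ?thesis
      using ratio_le_comp_ratio[of 1 "\<lambda>_. 0" "\<lambda>_. 1" m \<alpha> A] by (simp add: valid_instance_def top_unique)
  next
    case False
    then obtain D t where D: "d1 0 = ereal D" "0 \<le> D" "D < t" and slow: "work m w1 0 t \<le> ennreal (1 / 2)"
      using unit_job_slow_start[OF rul A1 _ \<alpha>] by blast
    let ?cost = "cost m \<alpha> (Suc m) (batch_release t) batch_size (fst (A (Suc m) (batch_release t) batch_size))"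
    have "ennreal (real m powr (1 - 1 / \<alpha>) / (6 * 32 powr \<alpha>)) =
        ennreal (real m powr (2 - 1 / \<alpha>) / 32 powr \<alpha>) / ennreal (6 * real m)"
      using m powr_two_minus_inverse[of "real m" \<alpha>] by (simp add: divide_ennreal field_simps)
    also have "\<dots> \<le> ?cost / ennreal (6 * real m)"
      by (intro divide_right_mono_ennreal batch_cost_ge[OF pol A1 D slow m \<alpha>])
    also have "\<dots> \<le> ?cost / opt m \<alpha> (Suc m) (batch_release t) batch_size"
      unfolding divide_ennreal_def using D m by (intro mult_left_mono ennreal_inverse_antimono opt_batch_le) auto
    also have "\<dots> \<le> comp_ratio m \<alpha> A"
      using D by (intro ratio_le_comp_ratio valid_batch_instance) auto
    finally show ?thesis .
  qed
qed

theorem lemma8: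
  fixes \<alpha> :: real
  assumes "\<alpha> > 1"
  shows "\<exists>\<kappa>>0. \<forall>m::nat. m \<ge> 1 \<longrightarrow> (\<forall>A. srpt_nonmig_policy m A \<longrightarrow>
           comp_ratio m \<alpha> A \<ge> ennreal (\<kappa> * real m powr (1 - 1 / \<alpha>)))"
proof (intro exI[of _ "1 / (6 * 32 powr \<alpha>)"] conjI allI impI)
  fix m :: nat and A assume "1 \<le> m" "srpt_nonmig_policy m A"
  then show "ennreal (1 / (6 * 32 powr \<alpha>) * real m powr (1 - 1 / \<alpha>)) \<le> comp_ratio m \<alpha> A"
    using comp_ratio_ge_srpt_nonmig[OF assms] by simp
qed simp

end
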